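(* Let $m_i>0$, $v_{ik}\in\mathbb R$ and $\eta_{il}\in\mathbb R$ ($i=1,\dots,n$, $l=1,\dots,p$) be given, with $\eta_{ij}$ depending on the coordinate $\varphi_{jk}$ through $\eta_{ij}=c_{ij}+v_{ik}\varphi_{jk}$ and the $\eta_{il}$, $l\ne j$, not depending on $\varphi_{jk}$. Let $q_{ij}(\varphi_{jk})=e^{\eta_{ij}}/\sum_{l=1}^pe^{\eta_{il}}$ and $h(\varphi_{jk})=\sum_{i=1}^n m_iv_{ik}^2q_{ij}(1-q_{ij})$. Fix the current value $\varphi_{jk}$ and $\delta>0$; set $E_{ij}=\sum_{l\ne j}e^{\eta_{il}}$ and $$e_{ij}=\begin{cases}e^{\eta_{ij}-|v_{ik}|\delta}&\text{if }E_{ij}<e^{\eta_{ij}-|v_{ik}|\delta},\\ e^{\eta_{ij}+|v_{ik}|\delta}&\text{if }E_{ij}>e^{\eta_{ij}+|v_{ik}|\delta},\\ E_{ij}&\text{otherwise},\end{cases}\qquad F_{ij}=\frac{e_{ij}}{E_{ij}}+\frac{E_{ij}}{e_{ij}}+2,$$ where $\eta_{ij}$ is evaluated at the current $\varphi_{jk}$. Then $H_{jk}=\sum_{i=1}^n m_iv_{ik}^2/F_{ij}$ satisfies $h(\varphi^\star)\le H_{jk}$ for every $\varphi^\star$ with $|\varphi^\star-\varphi_{jk}|\le\delta$.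
   Context: This is the trust-region curvature bound for coordinate descent on the negative multinomial logistic log likelihood $l=-\sum_i[\sum_j x_{ij}\eta_{ij}-m_i\log\sum_l e^{\eta_{il}}]$, whose second derivative in $\varphi_{jk}$ is $h$. *)

theory Defs
  imports Complex_Main
begin

text \<open>Linear predictor as a function of the coordinate phi = varphi_jk:
  eta_ij = c_i + v_i * phi, while eta_il (l ~= j) are fixed values eta i l.\<close>
definition etaf :: "(nat \<Rightarrow> real) \<Rightarrow> (nat \<Rightarrow> real) \<Rightarrow> (nat \<Rightarrow> nat \<Rightarrow> real) \<Rightarrow> nat \<Rightarrow> real \<Rightarrow> nat \<Rightarrow> nat \<Rightarrow> real" where
  "etaf c v eta j phi i l = (if l = j then c i + v i * phi else eta i l)"

definition qf :: "nat \<Rightarrow> (nat \<Rightarrow> real) \<Rightarrow> (nat \<Rightarrow> real) \<Rightarrow> (nat \<Rightarrow> nat \<Rightarrow> real) \<Rightarrow> nat \<Rightarrow> real \<Rightarrow> nat \<Rightarrow> real" where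
  "qf p c v eta j phi i =
     exp (etaf c v eta j phi i j) / (\<Sum>l<p. exp (etaf c v eta j phi i l))"

definition hf :: "nat \<Rightarrow> nat \<Rightarrow> (nat \<Rightarrow> real) \<Rightarrow> (nat \<Rightarrow> real) \<Rightarrow> (nat \<Rightarrow> real) \<Rightarrow> (nat \<Rightarrow> nat \<Rightarrow> real) \<Rightarrow> nat \<Rightarrow> real \<Rightarrow> real" where
  "hf n p m c v eta j phi =
     (\<Sum>i<n. m i * (v i)^2 * qf p c v eta j phi i * (1 - qf p c v eta j phi i))"

definition Ef :: "nat \<Rightarrow> (nat \<Rightarrow> nat \<Rightarrow> real) \<Rightarrow> nat \<Rightarrow> nat \<Rightarrow> real" where
  "Ef p eta j i = (\<Sum>l\<in>{..<p} - {j}. exp (eta i l))"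

definition ef :: "real \<Rightarrow> real \<Rightarrow> real \<Rightarrow> real \<Rightarrow> real" where
  "ef E etaj vik delta =
     (if E < exp (etaj - \<bar>vik\<bar> * delta) then exp (etaj - \<bar>vik\<bar> * delta)
      else if E > exp (etaj + \<bar>vik\<bar> * delta) then exp (etaj + \<bar>vik\<bar> * delta)
      else E)"

definition Ff :: "real \<Rightarrow> real \<Rightarrow> real \<Rightarrow> real \<Rightarrow> real" where
  "Ff E etaj vik delta = ef E etaj vik delta / E + E / ef E etaj vik delta + 2"

definition Hf :: "nat \<Rightarrow> nat \<Rightarrow> (nat \<Rightarrow> real) \<Rightarrow> (nat \<Rightarrow> real) \<Rightarrow> (nat \<Rightarrow> real) \<Rightarrow> (nat \<Rightarrow> nat \<Rightarrow> real) \<Rightarrow> nat \<Rightarrow> real \<Rightarrow> real \<Rightarrow> real" where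
  "Hf n p m c v eta j phi delta =
     (\<Sum>i<n. m i * (v i)^2 /
        Ff (Ef p eta j i) (etaf c v eta j phi i j) (v i) delta)"

end

theory Submission
  imports Defs
begin

(* Both h and H are sums over the observations i, so it suffices
   to bound each summand.  Write x = exp eta_ij(phi') and E = E_ij.  Then
   q_ij = x / (x + E), and for E > 0 one has the identity
       q (1 - q) = 1 / (x/E + E/x + 2).
   Since |phi' - phi| <= delta, x lies in the window [a, b] with
   a = exp (eta_ij - |v_ik| delta), b = exp (eta_ij + |v_ik| delta).
   The function y |-> y/E + E/y decreases for y <= E and increases for y >= E,
   so over the window it is minimised at the clamp e_ij of E into [a, b];
   hence F_ij <= x/E + E/x + 2, which gives the summand bound. *)

lemma plus_reciprocal_mono:
  fixes s t :: real
  assumes "1 \<le> s" "s \<le> t"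
  shows "s + 1/s \<le> t + 1/t"
proof -
  have "1 \<le> s * t" using assms by (metis mult_mono' mult_1 order_trans zero_le_one)
  then have "(t - s) * (s * t - 1) \<ge> 0" using assms by simp
  moreover have "t + 1/t - (s + 1/s) = (t - s) * (s * t - 1) / (s * t)"
    using assms by (simp add: field_simps)
  moreover have "s * t > 0" using assms by simp
  ultimately show ?thesis by (smt (verit) divide_nonneg_pos)
qed

text \<open>Over a window [a, b] of positive reals, y/E + E/y is minimised at the
  clamp of E into [a, b]; this is the choice of e_ij in the paper.\<close>
lemma clamp_minimises_ratio_sum:
  fixes E x a b e :: real
  assumes E: "E > 0" and a: "a > 0" and ax: "a \<le> x" and xb: "x \<le> b"
    and e: "e = (if E < a then a else if E > b then b else E)"
  shows "e / E + E / e \<le> x / E + E / x"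
proof -
  have x: "x > 0" using a ax by simp
  consider (below) "E < a" | (above) "\<not> E < a" "E > b" | (inside) "\<not> E < a" "\<not> E > b"
    by blast
  then show ?thesis
  proof cases
    case below
    then have "a/E + 1/(a/E) \<le> x/E + 1/(x/E)"
      using E ax by (intro plus_reciprocal_mono) (auto simp: field_simps)
    then show ?thesis using below e by simp
  next
    case above
    then have "E/b + 1/(E/b) \<le> E/x + 1/(E/x)"
      using E xb x by (intro plus_reciprocal_mono) (auto simp: field_simps frac_le)
    then show ?thesis using above e by simp
  next
    case inside
    have "2 \<le> x/E + E/x"
    proof (cases "E \<le> x")
      case True
      then have "1 + 1/1 \<le> x/E + 1/(x/E)" using E by (intro plus_reciprocal_mono) auto
      then show ?thesis by simp
    next
      case False
      then have "1 + 1/1 \<le> E/x + 1/(E/x)" using x by (intro plus_reciprocal_mono) auto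
      then show ?thesis by simp
    qed
    then show ?thesis using inside e E by simp
  qed
qed

lemma softmax_variance_eq:
  fixes x E :: real
  assumes "x > 0" "E > 0"
  shows "x / (x + E) * (1 - x / (x + E)) = 1 / (x / E + E / x + 2)"
  using assms by (simp add: field_simps power2_eq_square)

lemma summand_bound:
  fixes E x a b mm e q :: real
  assumes E: "E \<ge> 0" and a: "a > 0" and ax: "a \<le> x" and xb: "x \<le> b" and mm: "mm \<ge> 0"
    and e: "e = (if E < a then a else if E > b then b else E)"
    and q: "q = x / (x + E)"
  shows "mm * q * (1 - q) \<le> mm / (e / E + E / e + 2)"
proof (cases "E = 0")
  case True
  have "x > 0" using a ax by simp
  then have "q = 1" using q True by simp
  then show ?thesis using True mm by simp
next
  case False
  then have E: "E > 0" using E by simp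
  have x: "x > 0" using a ax by simp
  have "e > 0" using e E a ax xb by auto
  then have F_pos: "e / E + E / e + 2 > 0" using E by (intro add_nonneg_pos) auto
  have "q * (1 - q) = 1 / (x / E + E / x + 2)"
    using softmax_variance_eq[OF x E] q by simp
  also have "\<dots> \<le> 1 / (e / E + E / e + 2)"
    using clamp_minimises_ratio_sum[OF E a ax xb e] F_pos by (intro divide_left_mono) auto
  finally have "mm * (q * (1 - q)) \<le> mm * (1 / (e / E + E / e + 2))"
    using mm by (rule mult_left_mono)
  then show ?thesis by simp
qed

lemma softmax_denominator_split:
  assumes "j < p"
  shows "(\<Sum>l<p. exp (etaf c v eta j phi i l)) = exp (c i + v i * phi) + Ef p eta j i"
proof -
  have "(\<Sum>l<p. exp (etaf c v eta j phi i l)) =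
      exp (etaf c v eta j phi i j) + (\<Sum>l\<in>{..<p} - {j}. exp (etaf c v eta j phi i l))"
    using assms by (subst sum.remove[of _ j]) auto
  also have "(\<Sum>l\<in>{..<p} - {j}. exp (etaf c v eta j phi i l)) = Ef p eta j i"
    unfolding Ef_def by (rule sum.cong) (auto simp: etaf_def)
  finally show ?thesis by (simp add: etaf_def)
qed

lemma exp_trust_window:
  fixes c w phi phistar delta :: real
  assumes "\<bar>phistar - phi\<bar> \<le> delta"
  shows "exp (c + w * phi - \<bar>w\<bar> * delta) \<le> exp (c + w * phistar)"
    and "exp (c + w * phistar) \<le> exp (c + w * phi + \<bar>w\<bar> * delta)"
proof -
  have "\<bar>w * (phistar - phi)\<bar> \<le> \<bar>w\<bar> * delta"
    using assms by (simp add: abs_mult mult_left_mono)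
  then show "exp (c + w * phi - \<bar>w\<bar> * delta) \<le> exp (c + w * phistar)"
    and "exp (c + w * phistar) \<le> exp (c + w * phi + \<bar>w\<bar> * delta)"
    by (simp_all add: algebra_simps abs_le_iff)
qed

theorem mainTheorem7:
  fixes n p j :: nat and m c v :: "nat \<Rightarrow> real" and eta :: "nat \<Rightarrow> nat \<Rightarrow> real"
    and phi delta phistar :: real
  assumes "\<forall>i<n. m i > 0"
    and "j < p"
    and "delta > 0"
    and "\<bar>phistar - phi\<bar> \<le> delta"
  shows "hf n p m c v eta j phistar \<le> Hf n p m c v eta j phi delta"
  unfolding hf_def Hf_def
proof (rule sum_mono)
  fix i assume i: "i \<in> {..<n}"
  define E where "E = Ef p eta j i"
  define x where "x = exp (c i + v i * phistar)"
  have q: "qf p c v eta j phistar i = x / (x + E)"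
    unfolding qf_def softmax_denominator_split[OF assms(2)] by (simp add: etaf_def x_def E_def)
  have E_nonneg: "E \<ge> 0" unfolding E_def Ef_def by (simp add: sum_nonneg)
  note window = exp_trust_window[OF assms(4), of "c i" "v i", folded x_def]
  have "m i * (v i)^2 * qf p c v eta j phistar i * (1 - qf p c v eta j phistar i)
      \<le> m i * (v i)^2 / Ff E (c i + v i * phi) (v i) delta"
    unfolding Ff_def
    by (rule summand_bound[OF E_nonneg _ window _ _ q])
       (use assms(1) i in \<open>auto simp: ef_def\<close>)
  then show "m i * (v i)^2 * qf p c v eta j phistar i * (1 - qf p c v eta j phistar i)
      \<le> m i * (v i)^2 / Ff (Ef p eta j i) (etaf c v eta j phi i j) (v i) delta"
    by (simp add: E_def etaf_def)
qed

end
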